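(* Let $U$ be a finite nonempty set, $R$ an equivalence relation on $U$, and $M(R)$ the support matroid induced by $R$. For every $X\subseteq U$, $X$ is a closed set of $M(R)$ if and only if $X$ is a union of some elements of $U/R$ (the set of equivalence classes of $R$).
   Context: For $x\in U$, $RN(x)=\{y\in U\mid xRy\}$; $R^{*}(X)=\{x\in U\mid RN(x)\cap X\neq\emptyset\}$. Let $\mathbf{S}(R)=\{X\subseteq U\mid R^{*}(X)=U\}$. The support matroid $M(R)=(U,\mathbf{I}(R))$ is the matroid on $U$ whose independent sets $\mathbf{I}(R)$ are the subsets of inclusion-minimal members of $\mathbf{S}(R)$. For a matroid $(U,\mathbf{I})$, the rank is $r(X)=\max\{|I|\mid I\subseteq X, I\in\mathbf{I}\}$, the closure is $cl(X)=\{e\in U\mid r(X)=r(X\cup\{e\})\}$, and $X$ is closed if $cl(X)=X$. *)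

theory Defs
  imports Main
begin

definition RN :: "'a set \<Rightarrow> ('a \<times> 'a) set \<Rightarrow> 'a \<Rightarrow> 'a set" where
  "RN U R x = {y \<in> U. (x, y) \<in> R}"

definition upper_approx :: "'a set \<Rightarrow> ('a \<times> 'a) set \<Rightarrow> 'a set \<Rightarrow> 'a set" where
  "upper_approx U R X = {x \<in> U. RN U R x \<inter> X \<noteq> {}}"

definition support_sets :: "'a set \<Rightarrow> ('a \<times> 'a) set \<Rightarrow> 'a set set" where
  "support_sets U R = {X. X \<subseteq> U \<and> upper_approx U R X = U}"

definition supp_indep :: "'a set \<Rightarrow> ('a \<times> 'a) set \<Rightarrow> 'a set set" where
  "supp_indep U R = {I. \<exists>X \<in> support_sets U R.
      (\<forall>Y \<in> support_sets U R. Y \<subseteq> X \<longrightarrow> Y = X) \<and> I \<subseteq> X}"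

definition mrank :: "'a set set \<Rightarrow> 'a set \<Rightarrow> nat" where
  "mrank Ind X = Max {card I | I. I \<subseteq> X \<and> I \<in> Ind}"

definition mclosure :: "'a set \<Rightarrow> 'a set set \<Rightarrow> 'a set \<Rightarrow> 'a set" where
  "mclosure U Ind X = {e \<in> U. mrank Ind X = mrank Ind (X \<union> {e})}"

definition mclosed :: "'a set \<Rightarrow> 'a set set \<Rightarrow> 'a set \<Rightarrow> bool" where
  "mclosed U Ind X \<longleftrightarrow> mclosure U Ind X = X"

end

theory Submission
  imports Defs
begin

text \<open>For an equivalence relation the support sets are exactly the subsets of U meeting every
  class, so the independent sets of M(R) are the partial transversals of U/R: M(R) is the
  partition matroid of U/R in which every class has rank one. Hence the rank of X is the number
  of classes meeting X, the closure of X is the union of those classes, and the closed sets are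
  the unions of classes.\<close>

lemma inj_on_extend_image_eq:
  assumes "inj_on f I" and "I \<subseteq> A"
  obtains X where "I \<subseteq> X" and "X \<subseteq> A" and "inj_on f X" and "f ` X = f ` A"
proof
  define B where "B = inv_into A f ` (f ` A - f ` I)"
  have f_B: "f ` B = f ` A - f ` I"
    unfolding B_def image_image by (auto intro!: image_eqI simp: f_inv_into_f)
  have "inj_on f B"
    unfolding B_def by (rule inj_onI) (auto simp: f_inv_into_f)
  then show "inj_on f (I \<union> B)"
    using assms(1) f_B assms(2) by (auto simp: inj_on_Un)
  show "I \<subseteq> I \<union> B" by blast
  show "I \<union> B \<subseteq> A"
    using assms(2) unfolding B_def by (auto intro: inv_into_into)
  show "f ` (I \<union> B) = f ` A"
    using f_B assms(2) by auto
qed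

lemma minimal_image_cover_iff_inj_on:
  assumes "X \<subseteq> U" and "f ` X = f ` U"
  shows "(\<forall>Y\<in>{Y. Y \<subseteq> U \<and> f ` Y = f ` U}. Y \<subseteq> X \<longrightarrow> Y = X) \<longleftrightarrow> inj_on f X"
proof
  assume minimal: "\<forall>Y\<in>{Y. Y \<subseteq> U \<and> f ` Y = f ` U}. Y \<subseteq> X \<longrightarrow> Y = X"
  show "inj_on f X"
  proof (rule inj_onI, rule ccontr)
    fix x y assume "x \<in> X" "y \<in> X" "f x = f y" "x \<noteq> y"
    then have "f y \<in> f ` (X - {y})"
      by (metis DiffI image_eqI singletonD)
    moreover have "X = insert y (X - {y})"
      using \<open>y \<in> X\<close> by blast
    ultimately have "f ` (X - {y}) = f ` U"
      using assms(2) by (metis image_insert insert_absorb)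
    then have "X - {y} = X"
      using minimal[rule_format, of "X - {y}"] assms(1) by blast
    with \<open>y \<in> X\<close> show False by blast
  qed
next
  assume "inj_on f X"
  show "\<forall>Y\<in>{Y. Y \<subseteq> U \<and> f ` Y = f ` U}. Y \<subseteq> X \<longrightarrow> Y = X"
  proof (intro ballI impI)
    fix Y assume "Y \<in> {Y. Y \<subseteq> U \<and> f ` Y = f ` U}" and "Y \<subseteq> X"
    then have "f ` Y = f ` X"
      using assms(2) by simp
    with \<open>inj_on f X\<close> \<open>Y \<subseteq> X\<close> show "Y = X"
      using inj_on_image_eq_iff[of f X Y X] by simp
  qed
qed

lemma subsets_of_minimal_image_covers:
  fixes f :: "'a \<Rightarrow> 'b" and U :: "'a set"
  defines "S \<equiv> {X. X \<subseteq> U \<and> f ` X = f ` U}"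
  shows "{I. \<exists>X\<in>S. (\<forall>Y\<in>S. Y \<subseteq> X \<longrightarrow> Y = X) \<and> I \<subseteq> X} = {I. I \<subseteq> U \<and> inj_on f I}"
proof -
  have minimal_iff: "(\<forall>Y\<in>S. Y \<subseteq> X \<longrightarrow> Y = X) \<longleftrightarrow> inj_on f X" if "X \<in> S" for X
    using that minimal_image_cover_iff_inj_on[of X U f] unfolding S_def by simp
  show ?thesis
  proof (intro equalityI subsetI)
    fix I assume "I \<in> {I. \<exists>X\<in>S. (\<forall>Y\<in>S. Y \<subseteq> X \<longrightarrow> Y = X) \<and> I \<subseteq> X}"
    then obtain X where "X \<in> S" "\<forall>Y\<in>S. Y \<subseteq> X \<longrightarrow> Y = X" "I \<subseteq> X"
      by blast
    then have "X \<subseteq> U" "inj_on f X"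
      using minimal_iff unfolding S_def by auto
    with \<open>I \<subseteq> X\<close> show "I \<in> {I. I \<subseteq> U \<and> inj_on f I}"
      by (auto intro: inj_on_subset)
  next
    fix I assume "I \<in> {I. I \<subseteq> U \<and> inj_on f I}"
    then obtain X where "I \<subseteq> X" "X \<subseteq> U" "inj_on f X" "f ` X = f ` U"
      using inj_on_extend_image_eq[of f I U] by auto
    then have "X \<in> S" "\<forall>Y\<in>S. Y \<subseteq> X \<longrightarrow> Y = X"
      using minimal_iff[of X] unfolding S_def by auto
    with \<open>I \<subseteq> X\<close> show "I \<in> {I. \<exists>X\<in>S. (\<forall>Y\<in>S. Y \<subseteq> X \<longrightarrow> Y = X) \<and> I \<subseteq> X}"
      by blast
  qed
qed

lemma mrank_inj_on:
  assumes "finite X" and "X \<subseteq> U"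
  shows "mrank {I. I \<subseteq> U \<and> inj_on f I} X = card (f ` X)"
  unfolding mrank_def
proof (rule Max_eqI)
  let ?ranks = "{card I |I. I \<subseteq> X \<and> I \<in> {I. I \<subseteq> U \<and> inj_on f I}}"
  have bounded: "card I \<le> card (f ` X)" if "I \<subseteq> X" "inj_on f I" for I
    using that card_image[of f I] card_mono[of "f ` X" "f ` I"] assms(1) by auto
  then show "k \<le> card (f ` X)" if "k \<in> ?ranks" for k
    using that by blast
  have "?ranks \<subseteq> {..card (f ` X)}"
    using bounded by auto
  then show "finite ?ranks"
    using finite_subset by blast
  obtain B where "B \<subseteq> X" "inj_on f B" "f ` B = f ` X"
    using inj_on_extend_image_eq[of f "{}" X] by auto
  then have "card (f ` X) = card B" "B \<subseteq> X" "B \<in> {I. I \<subseteq> U \<and> inj_on f I}"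
    using assms(2) card_image[of f B] by auto
  then show "card (f ` X) \<in> ?ranks"
    by blast
qed

lemma mclosure_inj_on:
  assumes "finite X" and "X \<subseteq> U"
  shows "mclosure U {I. I \<subseteq> U \<and> inj_on f I} X = {e \<in> U. f e \<in> f ` X}"
proof -
  have "mrank {I. I \<subseteq> U \<and> inj_on f I} X = mrank {I. I \<subseteq> U \<and> inj_on f I} (X \<union> {e})
      \<longleftrightarrow> f e \<in> f ` X" if "e \<in> U" for e
  proof -
    have "mrank {I. I \<subseteq> U \<and> inj_on f I} (X \<union> {e}) = card (insert (f e) (f ` X))"
      using mrank_inj_on[of "X \<union> {e}" U f] assms that by simp
    moreover have "mrank {I. I \<subseteq> U \<and> inj_on f I} X = card (f ` X)"
      using mrank_inj_on[OF assms] .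
    ultimately show ?thesis
      using assms(1) by (simp add: card_insert_if)
  qed
  then show ?thesis
    unfolding mclosure_def by blast
qed

lemma support_sets_equiv:
  assumes "equiv U R"
  shows "support_sets U R = {X. X \<subseteq> U \<and> (\<lambda>x. R `` {x}) ` X = (\<lambda>x. R `` {x}) ` U}"
proof -
  have "upper_approx U R X = U \<longleftrightarrow> (\<lambda>x. R `` {x}) ` X = (\<lambda>x. R `` {x}) ` U" if "X \<subseteq> U" for X
  proof -
    have "upper_approx U R X = U \<longleftrightarrow> (\<forall>z\<in>U. \<exists>y\<in>X. (z, y) \<in> R)"
      using that unfolding upper_approx_def RN_def by blast
    also have "\<dots> \<longleftrightarrow> (\<forall>z\<in>U. \<exists>y\<in>X. R `` {z} = R `` {y})"
      using assms that by (meson eq_equiv_class_iff subsetD)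
    also have "\<dots> \<longleftrightarrow> (\<lambda>x. R `` {x}) ` U \<subseteq> (\<lambda>x. R `` {x}) ` X"
      by blast
    also have "\<dots> \<longleftrightarrow> (\<lambda>x. R `` {x}) ` X = (\<lambda>x. R `` {x}) ` U"
      using that by blast
    finally show ?thesis .
  qed
  then show ?thesis
    unfolding support_sets_def by blast
qed

lemma supp_indep_equiv:
  assumes "equiv U R"
  shows "supp_indep U R = {I. I \<subseteq> U \<and> inj_on (\<lambda>x. R `` {x}) I}"
  unfolding supp_indep_def support_sets_equiv[OF assms] by (rule subsets_of_minimal_image_covers)

lemma equiv_classes_meeting_eq_Image:
  assumes "equiv U R" and "X \<subseteq> U"
  shows "{e \<in> U. R `` {e} \<in> (\<lambda>x. R `` {x}) ` X} = R `` X"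
proof (intro equalityI subsetI)
  fix e assume "e \<in> {e \<in> U. R `` {e} \<in> (\<lambda>x. R `` {x}) ` X}"
  then obtain x where "x \<in> X" "e \<in> U" "R `` {e} = R `` {x}"
    by blast
  then have "(x, e) \<in> R"
    using equiv_class_self[OF assms(1), of e] by simp
  with \<open>x \<in> X\<close> show "e \<in> R `` X"
    by blast
next
  fix e assume "e \<in> R `` X"
  then obtain x where "x \<in> X" "(x, e) \<in> R"
    by blast
  then have "e \<in> U" "R `` {e} = R `` {x}"
    using equiv_type[OF assms(1)] equiv_class_eq[OF assms(1)] by auto
  with \<open>x \<in> X\<close> show "e \<in> {e \<in> U. R `` {e} \<in> (\<lambda>x. R `` {x}) ` X}"
    by blast
qed

lemma Image_eq_self_iff_Union_quotient:
  assumes "equiv U R" and "X \<subseteq> U"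
  shows "R `` X = X \<longleftrightarrow> (\<exists>F \<subseteq> U // R. X = \<Union>F)"
proof
  assume "R `` X = X"
  then have "X = \<Union>((\<lambda>x. R `` {x}) ` X)" by blast
  moreover have "(\<lambda>x. R `` {x}) ` X \<subseteq> U // R"
    using assms(2) by (auto intro: quotientI)
  ultimately show "\<exists>F \<subseteq> U // R. X = \<Union>F" by blast
next
  assume "\<exists>F \<subseteq> U // R. X = \<Union>F"
  then obtain F where "F \<subseteq> U // R" and "X = \<Union>F" by blast
  then have "R `` X \<subseteq> X"
    using assms(1) by (auto elim!: quotientE dest: equiv_class_eq simp: equiv_class_eq_iff)
  moreover have "X \<subseteq> R `` X"
    using assms unfolding equiv_def refl_on_def by blast
  ultimately show "R `` X = X" by blast
qed

theorem proposition8: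
  fixes U :: "'a set" and R :: "('a \<times> 'a) set" and X :: "'a set"
  assumes "finite U" and "U \<noteq> {}" and "equiv U R" and "X \<subseteq> U"
  shows "mclosed U (supp_indep U R) X \<longleftrightarrow> (\<exists>F \<subseteq> U // R. X = \<Union>F)"
proof -
  have "finite X"
    using assms(1,4) by (rule finite_subset[rotated])
  then have "mclosure U (supp_indep U R) X = R `` X"
    using assms(3,4)
    by (simp add: supp_indep_equiv mclosure_inj_on equiv_classes_meeting_eq_Image)
  then show ?thesis
    unfolding mclosed_def using Image_eq_self_iff_Union_quotient[OF assms(3,4)] by simp
qed

end
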